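(* Fix $\theta$ with $\phi(\theta)<\beta$ and $Q\in\{0,1\}$, and suppose $\tau_1^d(\theta)\neq\tau_2^d(\theta)$. For every $\tau$ strictly between $\tau_1^d(\theta)$ and $\tau_2^d(\theta)$, we have $s_1(\theta,\tau)>s_2(\theta,\tau)$ if and only if $u(s_2(\theta,\tau))<u(s_1(\theta,\tau))$ (i.e., the firm prefers $s_2$ to $s_1$).
   Context: Setup. Let $Q\in\{0,1\}$ be a random variable with $\mathbb P(Q=1)=\pi\in(0,1)$, and let $(\Theta,\Gamma)$ be a real-valued random vector whose conditional joint density given $Q=1$ is $h_q$ and given $Q=0$ is $h_u$, both strictly positive on $\mathbb R^2$. Monotone likelihood ratio assumption: $l(\theta,\gamma)=h_q(\theta,\gamma)/h_u(\theta,\gamma)$ is continuous and strictly increasing in each of $\theta$ and $\gamma$, and for each $\theta$ the map $\gamma\mapsto l(\theta,\gamma)$ has infimum $0$ and supremum $+\infty$. Fix payoffs $x_q>0$, $x_u>0$. For $\tau\in(-x_u,x_q)$ let $A(\tau)=\mathbb 1\{l(\Theta,\Gamma)>\frac{(1-\pi)(x_u+\tau)}{\pi(x_q-\tau)}\}$, $s_1(\theta,\tau)=\mathbb E[Q\mid\Theta=\theta,A(\tau)=1]$, $s_2(\theta,\tau)=\mathbb E[A(\tau)\mid\Theta=\theta]$, $\phi(\theta)=\mathbb P(Q=1\mid\Theta=\theta)$. Regret. Fix a cutoff $c\in(-x_u,x_q)$ and let $\beta=(x_u+c)/(x_q+x_u)\in(0,1)$. For a score value $s\in[0,1]$ and a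 qualification value $Q\in\{0,1\}$ define $\mathcal N(s)=sx_q-(1-s)x_u$, $A'(s)=\mathbb 1\{\mathcal N(s)>c\}$ (i.e. $s>\beta$), $\mathcal P(s)=A'(s)(Qx_q-(1-Q)x_u)$, and the individual regret $u(s)=\mathcal N(s)-\mathcal P(s)$. The critical prejudice $\tau_k^d(\theta)$, $k=1,2$, is the unique $\tau\in(-x_u,x_q)$ with $s_k(\theta,\tau)=\beta$ (it exists for $k=1$ when $\phi(\theta)<\beta$, and always for $k=2$). The firm prefers $s$ to $s'$ at $(\theta,\tau)$ if $u(s(\theta,\tau))<u(s'(\theta,\tau))$. *)

theory Defs
  imports "HOL-Analysis.Analysis"
begin

definition lr :: "(real \<times> real \<Rightarrow> real) \<Rightarrow> (real \<times> real \<Rightarrow> real) \<Rightarrow> real \<times> real \<Rightarrow> real" where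
  "lr hq hu p = hq p / hu p"

definition thr :: "real \<Rightarrow> real \<Rightarrow> real \<Rightarrow> real \<Rightarrow> real" where
  "thr pr xq xu tau = ((1 - pr) * (xu + tau)) / (pr * (xq - tau))"

definition acc_set :: "(real \<times> real \<Rightarrow> real) \<Rightarrow> (real \<times> real \<Rightarrow> real) \<Rightarrow> real \<Rightarrow> real \<Rightarrow> real \<Rightarrow> real \<Rightarrow> real \<Rightarrow> real set" where
  "acc_set hq hu pr xq xu theta tau = {gamma. lr hq hu (theta, gamma) > thr pr xq xu tau}"

text \<open>P(Q=1, A(tau)=1 | Theta=theta) and P(Q=0, A(tau)=1 | Theta=theta), up to the common
  factor given by the marginal density of Theta at theta.\<close>
definition accq :: "(real \<times> real \<Rightarrow> real) \<Rightarrow> (real \<times> real \<Rightarrow> real) \<Rightarrow> real \<Rightarrow> real \<Rightarrow> real \<Rightarrow> real \<Rightarrow> real \<Rightarrow> real" where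
  "accq hq hu pr xq xu theta tau =
     pr * (LINT gamma|lborel. indicator (acc_set hq hu pr xq xu theta tau) gamma * hq (theta, gamma))"

definition accu :: "(real \<times> real \<Rightarrow> real) \<Rightarrow> (real \<times> real \<Rightarrow> real) \<Rightarrow> real \<Rightarrow> real \<Rightarrow> real \<Rightarrow> real \<Rightarrow> real \<Rightarrow> real" where
  "accu hq hu pr xq xu theta tau =
     (1 - pr) * (LINT gamma|lborel. indicator (acc_set hq hu pr xq xu theta tau) gamma * hu (theta, gamma))"

definition margq :: "(real \<times> real \<Rightarrow> real) \<Rightarrow> real \<Rightarrow> real \<Rightarrow> real" where
  "margq hq pr theta = pr * (LINT gamma|lborel. hq (theta, gamma))"

definition margu :: "(real \<times> real \<Rightarrow> real) \<Rightarrow> real \<Rightarrow> real \<Rightarrow> real" where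
  "margu hu pr theta = (1 - pr) * (LINT gamma|lborel. hu (theta, gamma))"

text \<open>s_1(theta,tau) = E[Q | Theta = theta, A(tau) = 1].\<close>
definition s1 :: "(real \<times> real \<Rightarrow> real) \<Rightarrow> (real \<times> real \<Rightarrow> real) \<Rightarrow> real \<Rightarrow> real \<Rightarrow> real \<Rightarrow> real \<Rightarrow> real \<Rightarrow> real" where
  "s1 hq hu pr xq xu theta tau =
     accq hq hu pr xq xu theta tau / (accq hq hu pr xq xu theta tau + accu hq hu pr xq xu theta tau)"

text \<open>s_2(theta,tau) = E[A(tau) | Theta = theta].\<close>
definition s2 :: "(real \<times> real \<Rightarrow> real) \<Rightarrow> (real \<times> real \<Rightarrow> real) \<Rightarrow> real \<Rightarrow> real \<Rightarrow> real \<Rightarrow> real \<Rightarrow> real \<Rightarrow> real" where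
  "s2 hq hu pr xq xu theta tau =
     (accq hq hu pr xq xu theta tau + accu hq hu pr xq xu theta tau) / (margq hq pr theta + margu hu pr theta)"

text \<open>phi(theta) = P(Q=1 | Theta = theta).\<close>
definition phi :: "(real \<times> real \<Rightarrow> real) \<Rightarrow> (real \<times> real \<Rightarrow> real) \<Rightarrow> real \<Rightarrow> real \<Rightarrow> real" where
  "phi hq hu pr theta = margq hq pr theta / (margq hq pr theta + margu hu pr theta)"

definition NN :: "real \<Rightarrow> real \<Rightarrow> real \<Rightarrow> real" where
  "NN xq xu s = s * xq - (1 - s) * xu"

definition Aprime :: "real \<Rightarrow> real \<Rightarrow> real \<Rightarrow> real \<Rightarrow> real" where
  "Aprime xq xu c s = (if NN xq xu s > c then 1 else 0)"

definition PP :: "real \<Rightarrow> real \<Rightarrow> real \<Rightarrow> real \<Rightarrow> real \<Rightarrow> real" where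
  "PP xq xu c Q s = Aprime xq xu c s * (Q * xq - (1 - Q) * xu)"

definition regret :: "real \<Rightarrow> real \<Rightarrow> real \<Rightarrow> real \<Rightarrow> real \<Rightarrow> real" where
  "regret xq xu c Q s = NN xq xu s - PP xq xu c Q s"

definition tau1d :: "(real \<times> real \<Rightarrow> real) \<Rightarrow> (real \<times> real \<Rightarrow> real) \<Rightarrow> real \<Rightarrow> real \<Rightarrow> real \<Rightarrow> real \<Rightarrow> real \<Rightarrow> real" where
  "tau1d hq hu pr xq xu beta theta =
     (THE tau. tau \<in> {-xu<..<xq} \<and> s1 hq hu pr xq xu theta tau = beta)"

definition tau2d :: "(real \<times> real \<Rightarrow> real) \<Rightarrow> (real \<times> real \<Rightarrow> real) \<Rightarrow> real \<Rightarrow> real \<Rightarrow> real \<Rightarrow> real \<Rightarrow> real \<Rightarrow> real" where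
  "tau2d hq hu pr xq xu beta theta =
     (THE tau. tau \<in> {-xu<..<xq} \<and> s2 hq hu pr xq xu theta tau = beta)"

end

theory Submission
  imports Defs
begin

text \<open>Given \<Theta> = \<theta>, the policy A(\<tau>) accepts exactly the \<gamma> above the cutoff x
  at which the likelihood ratio equals the threshold thr \<tau>, and this cutoff increases with \<tau>.
  Raising the cutoff lowers the acceptance probability s_2, while by the monotone likelihood
  ratio it raises the odds of the upper tails of h_q and h_u and hence the posterior s_1.
  As \<tau> varies, s_1 sweeps out (\<phi>(\<theta>), 1) and s_2 sweeps out (0, 1), so both attain \<beta>, at the
  critical prejudices. Strictly between them, s_1 and s_2 therefore lie on the same side of \<beta>, so both
  trigger the same decision A', and the regrets differ by
  N(s_1) - N(s_2) = (s_1 - s_2)(x_q + x_u). This argument never uses Q \<in> {0, 1}, the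
  measurability and normalisation of the joint densities, or the monotonicity of the ratio in \<theta>.\<close>

lemma integrable_indicator_times:
  fixes h :: "real \<Rightarrow> real"
  assumes "integrable lborel h" "A \<in> sets borel"
  shows "integrable lborel (\<lambda>g. indicator A g * h g)"
  using integrable_real_mult_indicator[of A lborel h] assms by (simp add: mult.commute)

lemma integral_pos_of_pos_on_interval:
  fixes f :: "real \<Rightarrow> real"
  assumes "integrable lborel f" "\<And>g. 0 \<le> f g" "\<And>g. a < g \<Longrightarrow> g < b \<Longrightarrow> 0 < f g" "a < b"
  shows "0 < integral\<^sup>L lborel f"
proof (rule ccontr)
  assume "\<not> 0 < integral\<^sup>L lborel f"
  with assms(2) have "integral\<^sup>L lborel f = 0"
    by (simp add: integral_nonneg order.antisym)
  with assms(1,2) have "AE g in lborel. f g = 0"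
    by (simp add: integral_nonneg_eq_0_iff_AE)
  then have "AE g in lborel. g \<notin> {a<..<b}"
    by eventually_elim (use assms(3) in force)
  then have "emeasure lborel {a<..<b} = 0"
    by (subst (asm) AE_iff_measurable[of "{a<..<b}"]) auto
  with assms(4) show False by simp
qed

lemma continuous_attains_between:
  fixes f :: "real \<Rightarrow> real"
  assumes "continuous_on UNIV f" "f a < y" "y < f b"
  shows "\<exists>x. f x = y"
proof (cases "a \<le> b")
  case True
  then show ?thesis using IVT'[of f a y b] assms by (auto intro: continuous_on_subset)
next
  case False
  then show ?thesis using IVT2'[of f a y b] assms by (auto intro: continuous_on_subset)
qed

lemma the_root_eqI:
  assumes "inj_on f S" "t \<in> S" "f t = y"
  shows "(THE t. t \<in> S \<and> f t = y) = t"
  using assms by (auto intro!: the_equality dest: inj_onD)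

lemma same_side_between_crossings:
  fixes f g :: "real \<Rightarrow> real"
  assumes "strict_mono_on I f" "strict_antimono_on I g"
    and "a \<in> I" "b \<in> I" "t \<in> I" "f a = y" "g b = y"
    and "min a b < t" "t < max a b"
  shows "(y < f t \<and> y < g t) \<or> (f t < y \<and> g t < y)"
proof (cases "a < b")
  case True
  with assms(8,9) have "a < t" "t < b" by auto
  then show ?thesis
    using strict_mono_onD[OF assms(1) assms(3,5)] monotone_onD[OF assms(2) assms(5,4)] assms(6,7)
    by auto
next
  case False
  with assms(8,9) have "b < t" "t < a" by auto
  then show ?thesis
    using strict_mono_onD[OF assms(1) assms(5,3)] monotone_onD[OF assms(2) assms(4,5)] assms(6,7)
    by auto
qed

definition upper_tail :: "(real \<Rightarrow> real) \<Rightarrow> real \<Rightarrow> real" where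
  "upper_tail h x = (LINT g|lborel. indicator {x<..} g * h g)"

context
  fixes h :: "real \<Rightarrow> real"
  assumes h_int: "integrable lborel h"
begin

lemma upper_tail_diff:
  assumes "x \<le> y"
  shows "upper_tail h x - upper_tail h y = (LINT g|lborel. indicator {x<..y} g * h g)"
proof -
  have "upper_tail h x - upper_tail h y
      = (LINT g|lborel. indicator {x<..} g * h g - indicator {y<..} g * h g)"
    unfolding upper_tail_def
    by (subst Bochner_Integration.integral_diff) (auto intro!: integrable_indicator_times h_int)
  also have "\<dots> = (LINT g|lborel. indicator {x<..y} g * h g)"
    by (rule Bochner_Integration.integral_cong) (use assms in \<open>auto simp: indicator_def\<close>)
  finally show ?thesis .
qed

lemma upper_tail_pos:
  assumes "\<And>g. 0 < h g"
  shows "0 < upper_tail h x"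
  unfolding upper_tail_def
proof (rule integral_pos_of_pos_on_interval[where a=x and b="x + 1"])
  show "integrable lborel (\<lambda>g. indicator {x<..} g * h g)"
    by (intro integrable_indicator_times h_int) simp
qed (auto intro: less_imp_le assms simp: indicator_def)

lemma upper_tail_strict_decreasing:
  assumes "\<And>g. 0 < h g" "x < y"
  shows "upper_tail h y < upper_tail h x"
proof -
  have "0 < (LINT g|lborel. indicator {x<..y} g * h g)"
  proof (rule integral_pos_of_pos_on_interval[where a=x and b=y])
    show "integrable lborel (\<lambda>g. indicator {x<..y} g * h g)"
      by (intro integrable_indicator_times h_int) simp
  qed (use assms in \<open>auto intro: less_imp_le simp: indicator_def\<close>)
  then show ?thesis using upper_tail_diff[of x y] assms(2) by simp
qed

lemma isCont_upper_tail: "isCont (upper_tail h) x0"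
proof (rule continuous_at_sequentiallyI)
  fix X :: "nat \<Rightarrow> real"
  assume X: "X \<longlonglongrightarrow> x0"
  have h_meas: "h \<in> borel_measurable lborel" using h_int by auto
  show "(\<lambda>n. upper_tail h (X n)) \<longlonglongrightarrow> upper_tail h x0"
    unfolding upper_tail_def
  proof (rule integral_dominated_convergence[where w="\<lambda>g. \<bar>h g\<bar>"])
    show "AE g in lborel. (\<lambda>n. indicator {X n<..} g * h g) \<longlonglongrightarrow> indicator {x0<..} g * h g"
      using AE_lborel_singleton[of x0]
    proof eventually_elim
      case (elim g)
      have "\<forall>\<^sub>F n in sequentially. (X n < g) = (x0 < g)"
      proof (cases "g < x0")
        case True
        show ?thesis using order_tendstoD(1)[OF X True] by eventually_elim (use True in auto)
      next
        case False
        with elim have "x0 < g" by simp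
        show ?thesis using order_tendstoD(2)[OF X \<open>x0 < g\<close>] by eventually_elim (use \<open>x0 < g\<close> in auto)
      qed
      then have "\<forall>\<^sub>F n in sequentially. indicator {x0<..} g * h g = indicator {X n<..} g * h g"
        by eventually_elim (simp add: indicator_def)
      then show ?case by (rule Lim_transform_eventually[OF tendsto_const])
    qed
  qed (use h_meas h_int in \<open>auto simp: indicator_def\<close>)
qed

lemma upper_tail_at_top: "(upper_tail h \<longlongrightarrow> 0) at_top"
proof -
  have h_meas: "h \<in> borel_measurable lborel" using h_int by auto
  have "((\<lambda>x. LINT g|lborel. indicator {x<..} g * h g) \<longlongrightarrow> integral\<^sup>L lborel (\<lambda>_::real. 0::real)) at_top"
  proof (rule integral_dominated_convergence_at_top[where w="\<lambda>g. \<bar>h g\<bar>"])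
    show "AE g in lborel. ((\<lambda>x. indicator {x<..} g * h g) \<longlongrightarrow> 0) at_top"
    proof (rule AE_I2)
      fix g
      have "\<forall>\<^sub>F x in at_top. 0 = indicator {x<..} g * h g"
        using eventually_ge_at_top[of g] by eventually_elim (auto simp: indicator_def)
      then show "((\<lambda>x. indicator {x<..} g * h g) \<longlongrightarrow> 0) at_top"
        by (rule Lim_transform_eventually[OF tendsto_const])
    qed
  qed (use h_meas h_int in \<open>auto simp: indicator_def\<close>)
  then show ?thesis unfolding upper_tail_def by simp
qed

lemma upper_tail_at_bot: "(upper_tail h \<longlongrightarrow> integral\<^sup>L lborel h) at_bot"
  unfolding filterlim_at_bot_mirror upper_tail_def
proof (rule integral_dominated_convergence_at_top[where w="\<lambda>g. \<bar>h g\<bar>"])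
  show "AE g in lborel. ((\<lambda>x. indicator {-x<..} g * h g) \<longlongrightarrow> h g) at_top"
  proof (rule AE_I2)
    fix g
    have "\<forall>\<^sub>F x in at_top. h g = indicator {-x<..} g * h g"
      using eventually_gt_at_top[of "-g"] by eventually_elim (auto simp: indicator_def)
    then show "((\<lambda>x. indicator {-x<..} g * h g) \<longlongrightarrow> h g) at_top"
      by (rule Lim_transform_eventually[OF tendsto_const])
  qed
qed (use h_int in \<open>auto simp: indicator_def\<close>)

end

lemma NN_gt_iff:
  assumes "0 < xq + xu"
  shows "c < NN xq xu s \<longleftrightarrow> (xu + c) / (xq + xu) < s"
  using assms by (simp add: NN_def pos_divide_less_eq algebra_simps)

lemma regret_less_iff_same_side:
  fixes xq xu c Q s s' :: real
  defines "\<beta> \<equiv> (xu + c) / (xq + xu)"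
  assumes "0 < xq + xu" and "(\<beta> < s \<and> \<beta> < s') \<or> (s < \<beta> \<and> s' < \<beta>)"
  shows "s' < s \<longleftrightarrow> regret xq xu c Q s' < regret xq xu c Q s"
proof -
  have "Aprime xq xu c s = Aprime xq xu c s'"
    using assms unfolding Aprime_def by (auto simp: NN_gt_iff)
  then have "regret xq xu c Q s - regret xq xu c Q s' = (s - s') * (xq + xu)"
    by (simp add: regret_def PP_def NN_def algebra_simps)
  moreover have "s' < s \<longleftrightarrow> 0 < (s - s') * (xq + xu)"
    using assms(2) by (simp add: zero_less_mult_iff)
  ultimately show ?thesis by linarith
qed

lemma thr_pos:
  assumes "0 < pr" "pr < 1" "tau \<in> {-xu<..<xq}"
  shows "0 < thr pr xq xu tau"
  using assms unfolding thr_def by (intro divide_pos_pos mult_pos_pos) auto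

lemma thr_strict_mono_on:
  assumes "0 < pr" "pr < 1"
  shows "strict_mono_on {-xu<..<xq} (thr pr xq xu)"
proof (rule strict_mono_onI)
  fix tau tau' assume "tau \<in> {-xu<..<xq}" "tau' \<in> {-xu<..<xq}" "tau < tau'"
  then show "thr pr xq xu tau < thr pr xq xu tau'"
    unfolding thr_def using assms by (intro frac_less) auto
qed

lemma thr_surj:
  assumes "0 < pr" "pr < 1" "0 < xq + xu" "0 < t"
  shows "\<exists>tau \<in> {-xu<..<xq}. thr pr xq xu tau = t"
proof
  define D where "D = (1 - pr) + t * pr"
  have "0 < D" using assms unfolding D_def by (simp add: add_pos_pos)
  define tau where "tau = (t * pr * xq - (1 - pr) * xu) / D"
  have plus: "xu + tau = t * pr * (xq + xu) / D" and minus: "xq - tau = (1 - pr) * (xq + xu) / D"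
    using \<open>0 < D\<close> unfolding tau_def D_def by (simp_all add: field_simps)
  have "0 < xu + tau" "0 < xq - tau"
    unfolding plus minus using assms \<open>0 < D\<close> by simp_all
  then show "tau \<in> {-xu<..<xq}" by simp
  have "(1 - pr) * (xu + tau) = t * (pr * (xq - tau))"
    unfolding plus minus by (simp add: algebra_simps)
  moreover have "pr * (xq - tau) \<noteq> 0" using assms \<open>0 < xq - tau\<close> by simp
  ultimately show "thr pr xq xu tau = t"
    unfolding thr_def by simp
qed

locale cutoff_model =
  fixes fq fu :: "real \<Rightarrow> real" and pr :: real
  assumes pr: "0 < pr" "pr < 1"
    and dens_pos: "\<And>g. 0 < fq g" "\<And>g. 0 < fu g"
    and dens_int: "integrable lborel fq" "integrable lborel fu"
    and ratio_cont: "continuous_on UNIV (\<lambda>g. fq g / fu g)"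
    and ratio_strict_mono: "strict_mono (\<lambda>g. fq g / fu g)"
    and ratio_inf: "(INF g. fq g / fu g) = 0"
    and ratio_unbounded: "\<not> bdd_above (range (\<lambda>g. fq g / fu g))"
begin

text \<open>fq and fu stand for the sections of h_q and h_u at a fixed \<theta>. Given \<Theta> = \<theta>,
  posterior x, accept_prob x and base_rate are P(Q = 1 | \<Gamma> > x), P(\<Gamma> > x) and P(Q = 1).\<close>

abbreviation ratio :: "real \<Rightarrow> real" where
  "ratio g \<equiv> fq g / fu g"

definition posterior :: "real \<Rightarrow> real" where
  "posterior x = pr * upper_tail fq x / (pr * upper_tail fq x + (1 - pr) * upper_tail fu x)"

definition accept_prob :: "real \<Rightarrow> real" where
  "accept_prob x = (pr * upper_tail fq x + (1 - pr) * upper_tail fu x)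
     / (pr * integral\<^sup>L lborel fq + (1 - pr) * integral\<^sup>L lborel fu)"

definition base_rate :: real where
  "base_rate = pr * integral\<^sup>L lborel fq / (pr * integral\<^sup>L lborel fq + (1 - pr) * integral\<^sup>L lborel fu)"

lemma ratio_pos: "0 < ratio g"
  using dens_pos by simp

lemma ratio_less_iff: "ratio x < ratio y \<longleftrightarrow> x < y"
  using strict_mono_less[OF ratio_strict_mono, of x y] by simp

lemma ratio_exceeds: "\<exists>y. t < ratio y"
  using ratio_unbounded unfolding bdd_above_def by (fastforce simp: not_le)

lemma ratio_attains:
  assumes "0 < t"
  shows "\<exists>x. ratio x = t"
proof -
  obtain a where "ratio a < t"
    using cInf_lessD[of "range ratio" t] ratio_inf assms by auto
  moreover obtain b where "t < ratio b"
    using ratio_exceeds by blast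
  ultimately show ?thesis
    using continuous_attains_between[OF ratio_cont] by blast
qed

lemma upper_tail_fq_pos: "0 < upper_tail fq x"
  by (rule upper_tail_pos[OF dens_int(1) dens_pos(1)])

lemma upper_tail_fu_pos: "0 < upper_tail fu x"
  by (rule upper_tail_pos[OF dens_int(2) dens_pos(2)])

lemma accept_mass_pos: "0 < pr * upper_tail fq x + (1 - pr) * upper_tail fu x"
  using pr upper_tail_fq_pos upper_tail_fu_pos by (simp add: add_pos_pos)

lemma integral_dens_pos: "0 < integral\<^sup>L lborel fq" "0 < integral\<^sup>L lborel fu"
  by (auto intro!: integral_pos_of_pos_on_interval[of _ 0 1] dens_int less_imp_le dens_pos)

lemma total_mass_pos: "0 < pr * integral\<^sup>L lborel fq + (1 - pr) * integral\<^sup>L lborel fu"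
  using pr integral_dens_pos by (simp add: add_pos_pos)

lemma base_rate_pos: "0 < base_rate"
  unfolding base_rate_def using pr integral_dens_pos total_mass_pos by simp

lemma upper_tail_ratio_less: "ratio y * upper_tail fu y < upper_tail fq y"
proof -
  have "0 < (LINT g|lborel. indicator {y<..} g * fq g - ratio y * (indicator {y<..} g * fu g))"
  proof (rule integral_pos_of_pos_on_interval[of _ y "y + 1"])
    show "integrable lborel (\<lambda>g. indicator {y<..} g * fq g - ratio y * (indicator {y<..} g * fu g))"
      by (intro Bochner_Integration.integrable_diff integrable_mult_right
          integrable_indicator_times dens_int) auto
    have "y < g \<Longrightarrow> ratio y * fu g < fq g" for g
      using ratio_less_iff[of y g] dens_pos(2)[of g] by (simp add: pos_less_divide_eq)
    then show "0 \<le> indicator {y<..} g * fq g - ratio y * (indicator {y<..} g * fu g)"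
      and "y < g \<Longrightarrow> g < y + 1 \<Longrightarrow> 0 < indicator {y<..} g * fq g - ratio y * (indicator {y<..} g * fu g)"
      for g by (auto simp: indicator_def less_imp_le)
  qed simp
  also have "\<dots> = upper_tail fq y - ratio y * upper_tail fu y"
    unfolding upper_tail_def
    by (subst Bochner_Integration.integral_diff)
      (auto intro!: integrable_mult_right integrable_indicator_times dens_int)
  finally show ?thesis by simp
qed

lemma upper_tail_diff_le:
  assumes "x < y"
  shows "upper_tail fq x - upper_tail fq y \<le> ratio y * (upper_tail fu x - upper_tail fu y)"
proof -
  have "upper_tail fq x - upper_tail fq y = (LINT g|lborel. indicator {x<..y} g * fq g)"
    using upper_tail_diff[OF dens_int(1)] assms by simp
  also have "\<dots> \<le> (LINT g|lborel. ratio y * (indicator {x<..y} g * fu g))"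
  proof (rule integral_mono)
    show "integrable lborel (\<lambda>g. indicator {x<..y} g * fq g)"
      by (intro integrable_indicator_times dens_int) auto
    show "integrable lborel (\<lambda>g. ratio y * (indicator {x<..y} g * fu g))"
      by (intro integrable_mult_right integrable_indicator_times dens_int) auto
    fix g
    have "g \<le> y \<Longrightarrow> fq g \<le> ratio y * fu g"
      using ratio_less_iff[of y g] dens_pos(2)[of g] by (simp add: pos_divide_le_eq not_less)
    then show "indicator {x<..y} g * fq g \<le> ratio y * (indicator {x<..y} g * fu g)"
      by (auto simp: indicator_def)
  qed
  also have "\<dots> = ratio y * (upper_tail fu x - upper_tail fu y)"
    using upper_tail_diff[OF dens_int(2)] assms by simp
  finally show ?thesis .
qed

lemma upper_tail_cross_less:
  assumes "x < y"
  shows "upper_tail fq x * upper_tail fu y < upper_tail fq y * upper_tail fu x"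
proof -
  define A B A' B' where "A = upper_tail fq y" "B = upper_tail fu y"
    "A' = upper_tail fq x" "B' = upper_tail fu x"
  have "0 < B" "0 < B' - B"
    using upper_tail_fu_pos upper_tail_strict_decreasing[OF dens_int(2) dens_pos(2) assms]
    unfolding A_B_A'_B'_def by auto
  have "(A' - A) * B \<le> ratio y * (B' - B) * B"
    using upper_tail_diff_le[OF assms] \<open>0 < B\<close> unfolding A_B_A'_B'_def
    by (intro mult_right_mono) auto
  also have "\<dots> = (ratio y * B) * (B' - B)" by simp
  also have "\<dots> < A * (B' - B)"
    using upper_tail_ratio_less \<open>0 < B' - B\<close> unfolding A_B_A'_B'_def
    by (intro mult_strict_right_mono) auto
  finally have "A' * B < A * B'" by (simp add: algebra_simps)
  then show ?thesis unfolding A_B_A'_B'_def .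
qed

lemma strict_mono_posterior: "strict_mono posterior"
proof (rule strict_monoI)
  fix x y :: real assume "x < y"
  have "pr * (1 - pr) * (upper_tail fq x * upper_tail fu y)
      < pr * (1 - pr) * (upper_tail fq y * upper_tail fu x)"
    using upper_tail_cross_less[OF \<open>x < y\<close>] pr by (intro mult_strict_left_mono) auto
  then show "posterior x < posterior y"
    unfolding posterior_def using accept_mass_pos[of x] accept_mass_pos[of y]
    by (simp add: divide_simps algebra_simps)
qed

lemma less_posteriorI:
  assumes "0 < b" "b < 1" "(1 - pr) * b < pr * (1 - b) * ratio y"
  shows "b < posterior y"
proof -
  have "(1 - pr) * b * upper_tail fu y < pr * (1 - b) * ratio y * upper_tail fu y"
    by (rule mult_strict_right_mono[OF assms(3) upper_tail_fu_pos])
  also have "\<dots> = pr * (1 - b) * (ratio y * upper_tail fu y)"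
    by (simp only: mult.assoc)
  also have "\<dots> < pr * (1 - b) * upper_tail fq y"
    using upper_tail_ratio_less pr assms(2) by (intro mult_strict_left_mono) auto
  finally show ?thesis
    unfolding posterior_def using accept_mass_pos[of y] by (simp add: divide_simps algebra_simps)
qed

lemma continuous_on_posterior: "continuous_on UNIV posterior"
  unfolding posterior_def[abs_def] using accept_mass_pos[THEN less_imp_neq, THEN not_sym]
  by (intro continuous_intros continuous_at_imp_continuous_on ballI isCont_upper_tail dens_int) auto

lemma posterior_at_bot: "(posterior \<longlongrightarrow> base_rate) at_bot"
  unfolding posterior_def[abs_def] base_rate_def using total_mass_pos
  by (intro tendsto_intros upper_tail_at_bot dens_int) auto

lemma posterior_attains:
  assumes "base_rate < b" "b < 1"
  shows "\<exists>x. posterior x = b"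
proof -
  have "0 < b" using assms(1) base_rate_pos by simp
  obtain a where "posterior a < b"
    using order_tendstoD(2)[OF posterior_at_bot assms(1)] by (auto simp: eventually_at_bot_linorder)
  moreover obtain y where "(1 - pr) * b / (pr * (1 - b)) < ratio y"
    using ratio_exceeds by blast
  then have "b < posterior y"
    using \<open>0 < b\<close> assms(2) pr by (intro less_posteriorI) (auto simp: divide_simps mult.commute)
  ultimately show ?thesis
    using continuous_attains_between[OF continuous_on_posterior] by blast
qed

lemma accept_prob_strict_decreasing:
  assumes "x < y"
  shows "accept_prob y < accept_prob x"
proof -
  have "pr * upper_tail fq y + (1 - pr) * upper_tail fu y
      < pr * upper_tail fq x + (1 - pr) * upper_tail fu x"
    using pr upper_tail_strict_decreasing[OF dens_int(1) dens_pos(1) assms]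
      upper_tail_strict_decreasing[OF dens_int(2) dens_pos(2) assms]
    by (intro add_strict_mono mult_strict_left_mono) auto
  then show ?thesis
    unfolding accept_prob_def using total_mass_pos by (simp add: divide_strict_right_mono)
qed

lemma continuous_on_accept_prob: "continuous_on UNIV accept_prob"
  unfolding accept_prob_def[abs_def] using total_mass_pos
  by (intro continuous_intros continuous_at_imp_continuous_on ballI isCont_upper_tail dens_int) auto

lemma accept_prob_at_top: "(accept_prob \<longlongrightarrow> 0) at_top"
proof -
  have "(accept_prob \<longlongrightarrow> (pr * 0 + (1 - pr) * 0)
      / (pr * integral\<^sup>L lborel fq + (1 - pr) * integral\<^sup>L lborel fu)) at_top"
    unfolding accept_prob_def[abs_def] using total_mass_pos
    by (intro tendsto_intros upper_tail_at_top dens_int) auto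
  then show ?thesis by simp
qed

lemma accept_prob_at_bot: "(accept_prob \<longlongrightarrow> 1) at_bot"
proof -
  have "(accept_prob \<longlongrightarrow> (pr * integral\<^sup>L lborel fq + (1 - pr) * integral\<^sup>L lborel fu)
      / (pr * integral\<^sup>L lborel fq + (1 - pr) * integral\<^sup>L lborel fu)) at_bot"
    unfolding accept_prob_def[abs_def] using total_mass_pos
    by (intro tendsto_intros upper_tail_at_bot dens_int) auto
  then show ?thesis using total_mass_pos by simp
qed

lemma accept_prob_attains:
  assumes "0 < b" "b < 1"
  shows "\<exists>x. accept_prob x = b"
proof -
  obtain a where "accept_prob a < b"
    using order_tendstoD(2)[OF accept_prob_at_top assms(1)] by (auto simp: eventually_at_top_linorder)
  moreover obtain c where "b < accept_prob c"
    using order_tendstoD(1)[OF accept_prob_at_bot assms(2)] by (auto simp: eventually_at_bot_linorder)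
  ultimately show ?thesis
    using continuous_attains_between[OF continuous_on_accept_prob] by blast
qed

end

locale mlr_section = cutoff_model "\<lambda>g. hq (theta, g)" "\<lambda>g. hu (theta, g)" pr
  for hq hu :: "real \<times> real \<Rightarrow> real" and theta pr :: real +
  fixes xq xu :: real
  assumes payoffs: "0 < xq + xu"
begin

lemma acc_set_eq_cutoff:
  assumes "ratio x = thr pr xq xu tau"
  shows "acc_set hq hu pr xq xu theta tau = {x<..}"
  unfolding acc_set_def lr_def assms[symmetric] using ratio_less_iff by auto

lemma scores_at_cutoff:
  assumes "ratio x = thr pr xq xu tau"
  shows "s1 hq hu pr xq xu theta tau = posterior x"
    and "s2 hq hu pr xq xu theta tau = accept_prob x"
  unfolding s1_def s2_def accq_def accu_def margq_def margu_def acc_set_eq_cutoff[OF assms]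
    posterior_def accept_prob_def upper_tail_def by simp_all

lemma phi_eq_base_rate: "phi hq hu pr theta = base_rate"
  unfolding phi_def margq_def margu_def base_rate_def by simp

lemma obtain_cutoff:
  assumes "tau \<in> {-xu<..<xq}"
  obtains x where "ratio x = thr pr xq xu tau"
  using ratio_attains thr_pos[OF pr assms] by blast

lemma cutoff_less:
  assumes "tau \<in> {-xu<..<xq}" "tau' \<in> {-xu<..<xq}" "tau < tau'"
    and "ratio x = thr pr xq xu tau" "ratio x' = thr pr xq xu tau'"
  shows "x < x'"
  using strict_mono_onD[OF thr_strict_mono_on[OF pr] assms(1-3)] assms(4,5) ratio_less_iff
  by metis

lemma s1_strict_mono_on: "strict_mono_on {-xu<..<xq} (s1 hq hu pr xq xu theta)"
proof (rule strict_mono_onI)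
  fix tau tau' assume tau: "tau \<in> {-xu<..<xq}" "tau' \<in> {-xu<..<xq}" "tau < tau'"
  obtain x x' where x: "ratio x = thr pr xq xu tau" and x': "ratio x' = thr pr xq xu tau'"
    using obtain_cutoff tau by metis
  show "s1 hq hu pr xq xu theta tau < s1 hq hu pr xq xu theta tau'"
    unfolding scores_at_cutoff(1)[OF x] scores_at_cutoff(1)[OF x']
    using strict_mono_posterior cutoff_less[OF tau x x'] by (rule strict_monoD)
qed

lemma s2_strict_antimono_on: "strict_antimono_on {-xu<..<xq} (s2 hq hu pr xq xu theta)"
proof (rule monotone_onI)
  fix tau tau' assume tau: "tau \<in> {-xu<..<xq}" "tau' \<in> {-xu<..<xq}" "tau < tau'"
  obtain x x' where x: "ratio x = thr pr xq xu tau" and x': "ratio x' = thr pr xq xu tau'"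
    using obtain_cutoff tau by metis
  show "s2 hq hu pr xq xu theta tau' < s2 hq hu pr xq xu theta tau"
    unfolding scores_at_cutoff(2)[OF x] scores_at_cutoff(2)[OF x']
    using cutoff_less[OF tau x x'] by (rule accept_prob_strict_decreasing)
qed

lemma tau_of_cutoff: "\<exists>tau \<in> {-xu<..<xq}. ratio x = thr pr xq xu tau"
  using thr_surj[OF pr payoffs ratio_pos] by metis

lemma tau1d_spec:
  assumes "base_rate < b" "b < 1"
  shows "tau1d hq hu pr xq xu b theta \<in> {-xu<..<xq}"
    and "s1 hq hu pr xq xu theta (tau1d hq hu pr xq xu b theta) = b"
proof -
  obtain x where "posterior x = b" using posterior_attains[OF assms] by blast
  moreover obtain tau where tau: "tau \<in> {-xu<..<xq}" "ratio x = thr pr xq xu tau"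
    using tau_of_cutoff by blast
  ultimately have "s1 hq hu pr xq xu theta tau = b" using scores_at_cutoff(1) by simp
  moreover have "tau1d hq hu pr xq xu b theta = tau"
    unfolding tau1d_def using strict_mono_on_imp_inj_on[OF s1_strict_mono_on] tau(1) calculation
    by (rule the_root_eqI)
  ultimately show "tau1d hq hu pr xq xu b theta \<in> {-xu<..<xq}"
    and "s1 hq hu pr xq xu theta (tau1d hq hu pr xq xu b theta) = b"
    using tau(1) by simp_all
qed

lemma tau2d_spec:
  assumes "0 < b" "b < 1"
  shows "tau2d hq hu pr xq xu b theta \<in> {-xu<..<xq}"
    and "s2 hq hu pr xq xu theta (tau2d hq hu pr xq xu b theta) = b"
proof -
  obtain x where "accept_prob x = b" using accept_prob_attains[OF assms] by blast
  moreover obtain tau where tau: "tau \<in> {-xu<..<xq}" "ratio x = thr pr xq xu tau"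
    using tau_of_cutoff by blast
  ultimately have "s2 hq hu pr xq xu theta tau = b" using scores_at_cutoff(2) by simp
  moreover have "tau2d hq hu pr xq xu b theta = tau"
    unfolding tau2d_def using s2_strict_antimono_on[unfolded strict_antimono_iff_antimono] tau(1) calculation
    by (intro the_root_eqI) auto
  ultimately show "tau2d hq hu pr xq xu b theta \<in> {-xu<..<xq}"
    and "s2 hq hu pr xq xu theta (tau2d hq hu pr xq xu b theta) = b"
    using tau(1) by simp_all
qed

end

theorem mainTheorem13:
  fixes hq hu :: "real \<times> real \<Rightarrow> real" and pr xq xu c theta Q tau :: real
  assumes pr: "0 < pr" "pr < 1"
    and pos: "\<And>p. hq p > 0" "\<And>p. hu p > 0"
    and meas: "hq \<in> borel_measurable lborel" "hu \<in> borel_measurable lborel"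
    and dens: "(\<integral>\<^sup>+ p. ennreal (hq p) \<partial>lborel) = 1" "(\<integral>\<^sup>+ p. ennreal (hu p) \<partial>lborel) = 1"
    and marg: "\<And>t. integrable lborel (\<lambda>g. hq (t, g))" "\<And>t. integrable lborel (\<lambda>g. hu (t, g))"
    and cont: "continuous_on UNIV (lr hq hu)"
    and mono_t: "\<And>g. strict_mono (\<lambda>t. lr hq hu (t, g))"
    and mono_g: "\<And>t. strict_mono (\<lambda>g. lr hq hu (t, g))"
    and inf0: "\<And>t. (INF g. lr hq hu (t, g)) = 0"
    and supinf: "\<And>t. \<not> bdd_above (range (\<lambda>g. lr hq hu (t, g)))"
    and pay: "xq > 0" "xu > 0"
    and cut: "-xu < c" "c < xq"
    and below: "phi hq hu pr theta < (xu + c) / (xq + xu)"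
    and Q: "Q = 0 \<or> Q = 1"
    and neq: "tau1d hq hu pr xq xu ((xu + c) / (xq + xu)) theta
              \<noteq> tau2d hq hu pr xq xu ((xu + c) / (xq + xu)) theta"
    and btw: "min (tau1d hq hu pr xq xu ((xu + c) / (xq + xu)) theta)
                  (tau2d hq hu pr xq xu ((xu + c) / (xq + xu)) theta) < tau"
             "tau < max (tau1d hq hu pr xq xu ((xu + c) / (xq + xu)) theta)
                  (tau2d hq hu pr xq xu ((xu + c) / (xq + xu)) theta)"
  shows "s1 hq hu pr xq xu theta tau > s2 hq hu pr xq xu theta tau \<longleftrightarrow>
         regret xq xu c Q (s2 hq hu pr xq xu theta tau) < regret xq xu c Q (s1 hq hu pr xq xu theta tau)"
proof -
  interpret mlr_section hq hu theta pr xq xu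
  proof unfold_locales
    show "continuous_on UNIV (\<lambda>g. hq (theta, g) / hu (theta, g))"
      using continuous_on_compose2[OF cont, of UNIV "\<lambda>g. (theta, g)"]
      by (simp add: lr_def continuous_intros)
  qed (use pr pos marg mono_g inf0 supinf pay in \<open>simp_all add: lr_def\<close>)
  define \<beta> where "\<beta> = (xu + c) / (xq + xu)"
  have \<beta>: "0 < \<beta>" "\<beta> < 1" "base_rate < \<beta>"
    using cut pay below phi_eq_base_rate by (simp_all add: \<beta>_def field_simps)
  define T1 T2 where "T1 = tau1d hq hu pr xq xu \<beta> theta" and "T2 = tau2d hq hu pr xq xu \<beta> theta"
  note T1 = tau1d_spec[OF \<beta>(3,2), folded T1_def]
  note T2 = tau2d_spec[OF \<beta>(1,2), folded T2_def]
  have between: "min T1 T2 < tau" "tau < max T1 T2"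
    using btw unfolding T1_def T2_def \<beta>_def by simp_all
  then have "tau \<in> {-xu<..<xq}"
    using T1(1) T2(1) by (auto simp: min_def max_def split: if_splits)
  with T1 T2 between have "(\<beta> < s1 hq hu pr xq xu theta tau \<and> \<beta> < s2 hq hu pr xq xu theta tau) \<or>
      (s1 hq hu pr xq xu theta tau < \<beta> \<and> s2 hq hu pr xq xu theta tau < \<beta>)"
    by (intro same_side_between_crossings[OF s1_strict_mono_on s2_strict_antimono_on])
  then show ?thesis
    using regret_less_iff_same_side[of xq xu c] pay unfolding \<beta>_def by simp
qed

end
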